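(* Let $p\ge 2$ and let $\alpha,\beta>0$ be reals with $$\alpha\beta\ <\ \frac{2p}{\lceil \log_2 p\rceil+2}.$$ Then there exists an in-tree task graph $T$ in the Pebble Game model such that no schedule $S$ of $T$ on $p$ processors satisfies both $C_{\max}(S)\le\alpha\,C^*_p(T)$ and $M(S)\le \beta\, M^*_p(T)$. Consequently, no algorithm is both an $\alpha(p)$-approximation for makespan minimization and a $\beta(p)$-approximation for peak memory minimization on $p$ processors with $\alpha(p)\beta(p)<2p/(\lceil\log_2 p\rceil+2)$.
   Context: Model. An in-tree task graph $T$ has nodes $\{1,\dots,n\}$ and a root; every non-root node $i$ has a parent, and $\mathrm{Children}(i)$ is the set of children of $i$. Each node $i$ has a processing time $w_i\ge 0$, an execution-file size $n_i\ge 0$ and an output-file size $f_i\ge 0$. A schedule on $p$ identical processors assigns each node $i$ a processor and a start time $\sigma_i\ge 0$; node $i$ runs without preemption during $[\sigma_i,\sigma_i+w_i)$, a processor runs at most one node at a time, and a node may start only after all its children have completed. The makespan is $C_{\max}=\max_i(\sigma_i+w_i)$. Memory: the output file of $i$ (size $f_i$) occupies memory from the start of $i$ until the completion of the parent of $i$ (for the root, until the end of the schedule), and the execution file of $i$ occupies memory while $i$ runs. The memory used at time $t$ is the total size of files present at time $t$; the peak memory $M(S)$ is the supremum over $t$ of the memory used. $C^*_p(T)$ denotes the minimum makespan and $M^*_p(T)$ the minimum peak memory over all schedules of $T$ on $p$ processors. The Pebble Game model is the special case $f_i=1$, $w_i=1$, $n_i=0$ for all $i$. *)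

theory Defs
  imports Complex_Main
begin

text \<open>In-tree task graphs. Nodes are 1..n, r is the root, par gives the parent of every
non-root node. Every node reaches the root by following parents.\<close>

definition in_tree :: "nat \<Rightarrow> nat \<Rightarrow> (nat \<Rightarrow> nat) \<Rightarrow> bool" where
  "in_tree n r par \<longleftrightarrow> r \<in> {1..n} \<and> (\<forall>i\<in>{1..n} - {r}. par i \<in> {1..n})
      \<and> (\<forall>i\<in>{1..n}. \<exists>k. (par ^^ k) i = r)"

definition children :: "nat \<Rightarrow> nat \<Rightarrow> (nat \<Rightarrow> nat) \<Rightarrow> nat \<Rightarrow> nat set" where
  "children n r par i = {j \<in> {1..n}. j \<noteq> r \<and> par j = i}"

definition valid_schedule ::
  "nat \<Rightarrow> nat \<Rightarrow> (nat \<Rightarrow> nat) \<Rightarrow> (nat \<Rightarrow> real) \<Rightarrow> nat \<Rightarrow> (nat \<Rightarrow> nat) \<Rightarrow> (nat \<Rightarrow> real) \<Rightarrow> bool" where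
  "valid_schedule n r par w p proc \<sigma> \<longleftrightarrow>
     (\<forall>i\<in>{1..n}. 0 \<le> \<sigma> i \<and> proc i < p)
   \<and> (\<forall>i\<in>{1..n}. \<forall>j\<in>{1..n}. i \<noteq> j \<and> proc i = proc j \<longrightarrow>
        {\<sigma> i..<\<sigma> i + w i} \<inter> {\<sigma> j..<\<sigma> j + w j} = {})
   \<and> (\<forall>i\<in>{1..n}. \<forall>j\<in>children n r par i. \<sigma> j + w j \<le> \<sigma> i)"

definition makespan :: "nat \<Rightarrow> (nat \<Rightarrow> real) \<Rightarrow> (nat \<Rightarrow> real) \<Rightarrow> real" where
  "makespan n w \<sigma> = Max ((\<lambda>i. \<sigma> i + w i) ` {1..n})"

text \<open>End of the lifetime of the output file of node i.\<close>
definition file_end :: "nat \<Rightarrow> nat \<Rightarrow> (nat \<Rightarrow> nat) \<Rightarrow> (nat \<Rightarrow> real) \<Rightarrow> (nat \<Rightarrow> real) \<Rightarrow> nat \<Rightarrow> real" where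
  "file_end n r par w \<sigma> i = (if i = r then makespan n w \<sigma> else \<sigma> (par i) + w (par i))"

text \<open>Memory used at time t (w: processing times, ne: execution file sizes, f: output file sizes).\<close>
definition mem_at :: "nat \<Rightarrow> nat \<Rightarrow> (nat \<Rightarrow> nat) \<Rightarrow> (nat \<Rightarrow> real) \<Rightarrow> (nat \<Rightarrow> real) \<Rightarrow> (nat \<Rightarrow> real)
    \<Rightarrow> (nat \<Rightarrow> real) \<Rightarrow> real \<Rightarrow> real" where
  "mem_at n r par w ne f \<sigma> t =
     (\<Sum>i\<in>{1..n}. (if \<sigma> i \<le> t \<and> t < file_end n r par w \<sigma> i then f i else 0)
                 + (if \<sigma> i \<le> t \<and> t < \<sigma> i + w i then ne i else 0))"

definition peak_mem :: "nat \<Rightarrow> nat \<Rightarrow> (nat \<Rightarrow> nat) \<Rightarrow> (nat \<Rightarrow> real) \<Rightarrow> (nat \<Rightarrow> real) \<Rightarrow> (nat \<Rightarrow> real)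
    \<Rightarrow> (nat \<Rightarrow> real) \<Rightarrow> real" where
  "peak_mem n r par w ne f \<sigma> = (SUP t. mem_at n r par w ne f \<sigma> t)"

definition opt_makespan :: "nat \<Rightarrow> nat \<Rightarrow> (nat \<Rightarrow> nat) \<Rightarrow> (nat \<Rightarrow> real) \<Rightarrow> nat \<Rightarrow> real" where
  "opt_makespan n r par w p =
     Inf {makespan n w \<sigma> | proc \<sigma>. valid_schedule n r par w p proc \<sigma>}"

definition opt_peak_mem :: "nat \<Rightarrow> nat \<Rightarrow> (nat \<Rightarrow> nat) \<Rightarrow> (nat \<Rightarrow> real) \<Rightarrow> (nat \<Rightarrow> real) \<Rightarrow> (nat \<Rightarrow> real)
    \<Rightarrow> nat \<Rightarrow> real" where
  "opt_peak_mem n r par w ne f p =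
     Inf {peak_mem n r par w ne f \<sigma> | proc \<sigma>. valid_schedule n r par w p proc \<sigma>}"

end

theory Submission
  imports Defs "HOL-Analysis.Analysis"
begin

(* In any schedule of an in-tree with n unit tasks, the output file of every
   non-root node lives for at least two time units (from its own start until its parent
   completes), the root file for at least one. Integrating the memory profile over [0, C]
   gives 2n - 1 <= M * C for every schedule with makespan C and peak memory M.

   Take p chains of K nodes each and hang the top of chain b below the top of
   chain b + 1 (a caterpillar whose spine consists of the p chain tops). Executing the nodes
   in index order on one processor needs memory at most 3, while running the p chains in
   parallel and then the spine sequentially has makespan K - 1 + p. Hence a schedule that is
   alpha-approximate for makespan and beta-approximate for memory would satisfy
   2pK - 1 <= 3 alpha beta (K - 1 + p), which fails for large K as soon as
   3 alpha beta < 2p. Since ceil(log2 p) >= 1 for p >= 2, the hypothesis of the theorem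
   implies this, so the caterpillar refutes every such pair (alpha, beta). *)

abbreviation pebble_schedule ::
  "nat \<Rightarrow> nat \<Rightarrow> (nat \<Rightarrow> nat) \<Rightarrow> nat \<Rightarrow> (nat \<Rightarrow> nat) \<Rightarrow> (nat \<Rightarrow> real) \<Rightarrow> bool" where
  "pebble_schedule n r par p proc \<sigma> \<equiv> valid_schedule n r par (\<lambda>_. 1) p proc \<sigma>"

abbreviation pebble_makespan :: "nat \<Rightarrow> (nat \<Rightarrow> real) \<Rightarrow> real" where
  "pebble_makespan n \<sigma> \<equiv> makespan n (\<lambda>_. 1) \<sigma>"

abbreviation pebble_peak :: "nat \<Rightarrow> nat \<Rightarrow> (nat \<Rightarrow> nat) \<Rightarrow> (nat \<Rightarrow> real) \<Rightarrow> real" where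
  "pebble_peak n r par \<sigma> \<equiv> peak_mem n r par (\<lambda>_. 1) (\<lambda>_. 0) (\<lambda>_. 1) \<sigma>"

abbreviation pebble_opt_makespan :: "nat \<Rightarrow> nat \<Rightarrow> (nat \<Rightarrow> nat) \<Rightarrow> nat \<Rightarrow> real" where
  "pebble_opt_makespan n r par p \<equiv> opt_makespan n r par (\<lambda>_. 1) p"

abbreviation pebble_opt_peak :: "nat \<Rightarrow> nat \<Rightarrow> (nat \<Rightarrow> nat) \<Rightarrow> nat \<Rightarrow> real" where
  "pebble_opt_peak n r par p \<equiv> opt_peak_mem n r par (\<lambda>_. 1) (\<lambda>_. 0) (\<lambda>_. 1) p"


section \<open>General facts about schedules\<close>

text \<open>If at most M of finitely many intervals inside [0, C] overlap at any point, their total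
  length is at most M * C (integrate the overlap count).\<close>

lemma sum_interval_lengths_le:
  fixes a b :: "nat \<Rightarrow> real"
  assumes "finite I" and "\<And>i. i \<in> I \<Longrightarrow> 0 \<le> a i \<and> a i \<le> b i \<and> b i \<le> C"
    and "\<And>t. (\<Sum>i\<in>I. indicator {a i..<b i} t) \<le> M" and "0 \<le> C"
  shows "(\<Sum>i\<in>I. b i - a i) \<le> M * C"
proof -
  have int: "integrable lborel (\<lambda>t. indicator {a i..<b i} t :: real)" for i
  proof (rule integrable_real_indicator)
    show "emeasure lborel {a i..<b i} < \<infinity>" by (cases "a i \<le> b i") auto
  qed simp
  have "(\<Sum>i\<in>I. b i - a i) = (\<Sum>i\<in>I. integral\<^sup>L lborel (\<lambda>t. indicator {a i..<b i} t :: real))"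
    using assms(2) by (intro sum.cong) auto
  also have "\<dots> = integral\<^sup>L lborel (\<lambda>t. \<Sum>i\<in>I. indicator {a i..<b i} t :: real)"
    by (rule Bochner_Integration.integral_sum[symmetric]) (rule int)
  also have "\<dots> \<le> integral\<^sup>L lborel (\<lambda>t. M * indicator {0..C} t :: real)"
  proof (rule Bochner_Integration.integral_mono)
    show "integrable lborel (\<lambda>t. \<Sum>i\<in>I. indicator {a i..<b i} t :: real)"
      by (rule Bochner_Integration.integrable_sum) (rule int)
    show "integrable lborel (\<lambda>t. M * indicator {0..C} t :: real)"
      using assms(4) by (intro integrable_mult_right integrable_real_indicator) auto
    fix t :: real
    show "(\<Sum>i\<in>I. indicator {a i..<b i} t) \<le> M * indicator {0..C} t"
    proof (cases "t \<in> {0..C}")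
      case True thus ?thesis using assms(3)[of t] by simp
    next
      case False
      hence "\<forall>i\<in>I. indicator {a i..<b i} t = (0::real)"
        using assms(2) by (force simp: indicator_def)
      thus ?thesis using False by simp
    qed
  qed
  also have "\<dots> = M * C" using assms(4) by simp
  finally show ?thesis .
qed

text \<open>The memory profile of any schedule is bounded, so it never exceeds the peak memory.\<close>

lemma mem_at_le_peak_mem:
  "mem_at n r par w ne f \<sigma> t \<le> peak_mem n r par w ne f \<sigma>"
proof -
  have "mem_at n r par w ne f \<sigma> s \<le> (\<Sum>i\<in>{1..n}. \<bar>f i\<bar> + \<bar>ne i\<bar>)" for s
    unfolding mem_at_def by (intro sum_mono) auto
  hence "bdd_above (range (mem_at n r par w ne f \<sigma>))" by (intro bdd_aboveI2)
  thus ?thesis unfolding peak_mem_def by (rule cSUP_upper[OF UNIV_I])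
qed

lemma pebble_scheduleI:
  assumes "\<And>i. i \<in> {1..n} \<Longrightarrow> 0 \<le> \<sigma> i \<and> proc i < p"
    and "\<And>i j. i \<in> {1..n} \<Longrightarrow> j \<in> {1..n} \<Longrightarrow> i \<noteq> j \<Longrightarrow> proc i = proc j \<Longrightarrow>
           \<sigma> i + 1 \<le> \<sigma> j \<or> \<sigma> j + 1 \<le> \<sigma> i"
    and "\<And>c. c \<in> {1..n} \<Longrightarrow> c \<noteq> r \<Longrightarrow> \<sigma> c + 1 \<le> \<sigma> (par c)"
  shows "pebble_schedule n r par p proc \<sigma>"
  unfolding valid_schedule_def
proof (intro conjI ballI impI)
  fix i j assume "i \<in> {1..n}" "j \<in> {1..n}" "i \<noteq> j \<and> proc i = proc j"
  hence "\<sigma> i + 1 \<le> \<sigma> j \<or> \<sigma> j + 1 \<le> \<sigma> i" using assms(2) by blast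
  thus "{\<sigma> i..<\<sigma> i + 1} \<inter> {\<sigma> j..<\<sigma> j + 1} = {}" by auto
qed (use assms in \<open>auto simp: children_def\<close>)

lemma file_lifetime_bounds:
  assumes T: "in_tree n r par" and V: "pebble_schedule n r par p proc \<sigma>"
    and i: "i \<in> {1..n}"
  shows "0 \<le> \<sigma> i"
    and "\<sigma> i + (if i = r then 1 else 2) \<le> file_end n r par (\<lambda>_. 1) \<sigma> i"
    and "file_end n r par (\<lambda>_. 1) \<sigma> i \<le> pebble_makespan n \<sigma>"
proof -
  have done_by_makespan: "\<sigma> k + 1 \<le> pebble_makespan n \<sigma>" if "k \<in> {1..n}" for k
    unfolding makespan_def using that by (intro Max_ge) auto
  have before_parent: "par i \<in> {1..n} \<and> \<sigma> i + 1 \<le> \<sigma> (par i)" if "i \<noteq> r"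
  proof -
    have pi: "par i \<in> {1..n}" using T i that by (simp add: in_tree_def)
    hence "i \<in> children n r par (par i)" using i that by (simp add: children_def)
    thus ?thesis using V pi by (simp add: valid_schedule_def)
  qed
  show "0 \<le> \<sigma> i" using V i by (simp add: valid_schedule_def)
  show "\<sigma> i + (if i = r then 1 else 2) \<le> file_end n r par (\<lambda>_. 1) \<sigma> i"
    using done_by_makespan[OF i] before_parent by (cases "i = r") (auto simp: file_end_def)
  show "file_end n r par (\<lambda>_. 1) \<sigma> i \<le> pebble_makespan n \<sigma>"
    using before_parent done_by_makespan by (auto simp: file_end_def)
qed

lemma pebble_makespan_nonneg:
  assumes "in_tree n r par" and "pebble_schedule n r par p proc \<sigma>"
  shows "0 \<le> pebble_makespan n \<sigma>"
proof -
  have r: "r \<in> {1..n}" using assms(1) by (simp add: in_tree_def)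
  show ?thesis using file_lifetime_bounds[OF assms r] by simp
qed

lemma pebble_peak_nonneg: "0 \<le> pebble_peak n r par \<sigma>"
proof -
  have "0 \<le> mem_at n r par (\<lambda>_. 1) (\<lambda>_. 0) (\<lambda>_. 1) \<sigma> 0"
    unfolding mem_at_def by (intro sum_nonneg) auto
  thus ?thesis using mem_at_le_peak_mem order_trans by blast
qed

lemma memory_makespan_tradeoff:
  assumes T: "in_tree n r par" and V: "pebble_schedule n r par p proc \<sigma>"
  shows "2 * real n - 1 \<le> pebble_peak n r par \<sigma> * pebble_makespan n \<sigma>"
proof -
  define e where "e = file_end n r par (\<lambda>_. 1) \<sigma>"
  have r: "r \<in> {1..n}" using T by (simp add: in_tree_def)
  note life = file_lifetime_bounds[OF T V, folded e_def]
  have "(\<Sum>i\<in>{1..n}. indicator {\<sigma> i..<e i} t) = mem_at n r par (\<lambda>_. 1) (\<lambda>_. 0) (\<lambda>_. 1) \<sigma> t"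
    for t :: real
    unfolding mem_at_def e_def by (intro sum.cong) (auto simp: indicator_def)
  hence overlap: "(\<Sum>i\<in>{1..n}. indicator {\<sigma> i..<e i} t) \<le> pebble_peak n r par \<sigma>" for t :: real
    using mem_at_le_peak_mem by metis
  have "2 * real n - 1 = (\<Sum>i\<in>{1..n}. 2 - (if i = r then 1 else 0 :: real))"
    using r by (simp add: sum_subtractf)
  also have "\<dots> = (\<Sum>i\<in>{1..n}. (if i = r then 1 else 2 :: real))"
    by (intro sum.cong) auto
  also have "\<dots> \<le> (\<Sum>i\<in>{1..n}. e i - \<sigma> i)"
    using life(2) by (intro sum_mono) force
  also have "\<dots> \<le> pebble_peak n r par \<sigma> * pebble_makespan n \<sigma>"
  proof (rule sum_interval_lengths_le)
    fix i assume "i \<in> {1..n}"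
    thus "0 \<le> \<sigma> i \<and> \<sigma> i \<le> e i \<and> e i \<le> pebble_makespan n \<sigma>"
      using life[of i] by (auto split: if_splits)
  qed (use overlap pebble_makespan_nonneg[OF T V] in auto)
  finally show ?thesis .
qed

lemma pebble_opt_makespan_le:
  assumes "in_tree n r par" and "pebble_schedule n r par p proc \<sigma>"
  shows "pebble_opt_makespan n r par p \<le> pebble_makespan n \<sigma>"
  unfolding opt_makespan_def
  using assms pebble_makespan_nonneg[OF assms(1)]
  by (intro cInf_lower bdd_belowI[of _ 0]) blast+

lemma pebble_opt_peak_le:
  assumes "pebble_schedule n r par p proc \<sigma>"
  shows "pebble_opt_peak n r par p \<le> pebble_peak n r par \<sigma>"
  unfolding opt_peak_mem_def
  using assms pebble_peak_nonneg
  by (intro cInf_lower bdd_belowI[of _ 0]) blast+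

lemma no_bicriteria_schedule:
  assumes T: "in_tree n r par" and "\<alpha> > 0" and "\<beta> > 0"
    and mem_witness: "pebble_schedule n r par p proc\<^sub>M \<sigma>\<^sub>M" "pebble_peak n r par \<sigma>\<^sub>M \<le> M\<^sub>0"
    and time_witness: "pebble_schedule n r par p proc\<^sub>C \<sigma>\<^sub>C" "pebble_makespan n \<sigma>\<^sub>C \<le> C\<^sub>0"
    and small: "\<alpha> * \<beta> * M\<^sub>0 * C\<^sub>0 < 2 * real n - 1"
    and V: "pebble_schedule n r par p proc \<sigma>"
  shows "\<not> (pebble_makespan n \<sigma> \<le> \<alpha> * pebble_opt_makespan n r par p \<and>
            pebble_peak n r par \<sigma> \<le> \<beta> * pebble_opt_peak n r par p)"
proof
  assume approx: "pebble_makespan n \<sigma> \<le> \<alpha> * pebble_opt_makespan n r par p \<and>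
                  pebble_peak n r par \<sigma> \<le> \<beta> * pebble_opt_peak n r par p"
  have C: "pebble_makespan n \<sigma> \<le> \<alpha> * C\<^sub>0"
    using approx pebble_opt_makespan_le[OF T time_witness(1)] time_witness(2) \<open>\<alpha> > 0\<close>
    by (smt (verit) mult_left_mono)
  have M: "pebble_peak n r par \<sigma> \<le> \<beta> * M\<^sub>0"
    using approx pebble_opt_peak_le[OF mem_witness(1)] mem_witness(2) \<open>\<beta> > 0\<close>
    by (smt (verit) mult_left_mono)
  have "0 \<le> \<beta> * M\<^sub>0" using M pebble_peak_nonneg order_trans by blast
  have "2 * real n - 1 \<le> pebble_peak n r par \<sigma> * pebble_makespan n \<sigma>"
    by (rule memory_makespan_tradeoff[OF T V])
  also have "\<dots> \<le> (\<beta> * M\<^sub>0) * (\<alpha> * C\<^sub>0)"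
    using M C \<open>0 \<le> \<beta> * M\<^sub>0\<close> pebble_makespan_nonneg[OF T V] by (intro mult_mono) auto
  finally show False using small by (simp add: algebra_simps)
qed


section \<open>The caterpillar instance\<close>

text \<open>Nodes 1..pK form p chains of K consecutive nodes; chain b consists of bK+1, ..., bK+K.
  Inside a chain each node points to its successor; the top node of a chain (a multiple of K)
  points to the top of the next chain. The root is the top pK of the last chain.\<close>

definition chain_par :: "nat \<Rightarrow> nat \<Rightarrow> nat" where
  "chain_par K i = (if K dvd i then i + K else i + 1)"

lemma node_decomp:
  fixes i p K :: nat
  assumes "i \<in> {1..p*K}" and "0 < K"
  obtains b j where "b < p" "j < K" "i = b*K + j + 1"
proof
  show "(i - 1) div K < p" using assms by (auto simp: div_less_iff_less_mult)
  show "(i - 1) mod K < K" using assms(2) by simp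
  show "i = (i - 1) div K * K + (i - 1) mod K + 1" using assms(1) by simp
qed

lemma top_of_chain_iff:
  fixes K b j :: nat
  assumes "j < K"
  shows "K dvd (b*K + j + 1) \<longleftrightarrow> j + 1 = K"
proof -
  have "K dvd (b*K + j + 1) \<longleftrightarrow> K dvd (j + 1)"
    by (metis add.assoc add.commute dvd_add_times_triv_right_iff)
  also have "\<dots> \<longleftrightarrow> j + 1 = K" using assms by (auto dest: dvd_imp_le)
  finally show ?thesis .
qed

lemma chain_par_gt: "0 < K \<Longrightarrow> i < chain_par K i"
  by (simp add: chain_par_def)

lemma chain_par_le:
  fixes K i p :: nat
  assumes "0 < K" and "i \<in> {1..p*K}" and "i \<noteq> p*K"
  shows "chain_par K i \<le> p*K"
proof (cases "K dvd i")
  case True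
  then obtain c where c: "i = K * c" by blast
  with assms have "c < p" by (simp add: mult.commute)
  hence "K * Suc c \<le> K * p" by (intro mult_le_mono2) simp
  thus ?thesis using True c by (simp add: chain_par_def mult.commute)
next
  case False
  thus ?thesis using assms by (simp add: chain_par_def)
qed

text \<open>Parents have larger indices and stay below the root, so every node reaches the root.\<close>

lemma chain_tree_in_tree:
  assumes K: "0 < K" and p: "0 < p"
  shows "in_tree (p*K) (p*K) (chain_par K)"
proof -
  let ?n = "p*K"
  have parent_in: "chain_par K i \<in> {1..?n}" if "i \<in> {1..?n} - {?n}" for i
    using that chain_par_le[OF K, of i p] chain_par_gt[OF K, of i] by auto
  have reaches_root: "\<exists>k. (chain_par K ^^ k) i = ?n" if "i \<in> {1..?n}" for i
    using that
  proof (induction "?n - i" arbitrary: i rule: less_induct)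
    case less
    show ?case
    proof (cases "i = ?n")
      case True thus ?thesis by (metis funpow_0)
    next
      case False
      have "?n - chain_par K i < ?n - i" using chain_par_gt[OF K, of i] less.prems False by auto
      then obtain k where "(chain_par K ^^ k) (chain_par K i) = ?n"
        using less.hyps parent_in less.prems False by blast
      hence "(chain_par K ^^ Suc k) i = ?n" by (simp only: funpow_Suc_right comp_def)
      thus ?thesis by blast
    qed
  qed
  show ?thesis unfolding in_tree_def using K p parent_in reaches_root by auto
qed

subsection \<open>A sequential schedule with memory 3\<close>

text \<open>Under the schedule sigma i = i - 1 the file of node i lives during [i - 1, i + 1), or
  during [i - 1, i + K) if i is a chain top. At any time at most three of these files are
  alive: the two files of the current and previous node, and at most one chain-top file
  created earlier (consecutive chain tops are K apart, so their long lifetimes are disjoint).\<close>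

lemma live_files_card:
  fixes K n :: nat and t :: real
  assumes "0 < K"
  shows "card {i\<in>{1..n}. real i - 1 \<le> t \<and> (t < real i + 1 \<or> (K dvd i \<and> t < real i + real K))} \<le> 3"
    (is "card ?B \<le> 3")
proof (cases "t < 0")
  case True
  hence "?B = {}" by auto
  thus ?thesis by (simp only: card.empty)
next
  case False
  define m where "m = nat \<lfloor>t\<rfloor>"
  have m: "real m \<le> t" "t < real m + 1" using False unfolding m_def by linarith+
  define Old where "Old = {i\<in>?B. i + 1 \<le> m}"
  have cover: "?B \<subseteq> {m, m+1} \<union> Old"
  proof
    fix i assume i: "i \<in> ?B"
    hence "i \<le> m + 1" using m by auto
    thus "i \<in> {m, m+1} \<union> Old" using i unfolding Old_def by auto
  qed
  have at_most_one_old: "card Old \<le> 1"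
  proof -
    have no_two: False if x: "x \<in> Old" and y: "y \<in> Old" and xy: "x < y" for x y
    proof -
      have "K dvd x" "t < real x + real K" "K dvd y" "y + 1 \<le> m"
        using x y m unfolding Old_def by auto
      then obtain u v where u: "x = K * u" and v: "y = K * v" by blast
      with xy have "K * Suc u \<le> K * v" by (intro mult_le_mono2) simp
      hence "x + K \<le> y" using u v by simp
      thus False using \<open>t < real x + real K\<close> \<open>y + 1 \<le> m\<close> m by linarith
    qed
    have "finite Old" unfolding Old_def by simp
    moreover have "\<forall>x\<in>Old. \<forall>y\<in>Old. x = y" using no_two by (metis linorder_neqE_nat)
    ultimately show ?thesis by (simp add: card_le_Suc0_iff_eq)
  qed
  have "card ?B \<le> card ({m, m+1} \<union> Old)" by (rule card_mono[OF _ cover]) (simp add: Old_def)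
  also have "\<dots> \<le> card {m, m+1} + card Old" by (rule card_Un_le)
  also have "\<dots> \<le> 3" using at_most_one_old by (simp add: card_insert_if)
  finally show ?thesis .
qed

lemma sequential_schedule:
  fixes K p :: nat
  assumes K: "0 < K" and p: "0 < p"
  shows "pebble_schedule (p*K) (p*K) (chain_par K) p (\<lambda>_. 0) (\<lambda>i. real i - 1)"
    and "pebble_peak (p*K) (p*K) (chain_par K) (\<lambda>i. real i - 1) \<le> 3"
proof -
  let ?n = "p*K" and ?s = "\<lambda>i::nat. real i - 1"
  show "pebble_schedule ?n ?n (chain_par K) p (\<lambda>_. 0) ?s"
  proof (rule pebble_scheduleI)
    fix c assume "c \<in> {1..?n}" "c \<noteq> ?n"
    show "?s c + 1 \<le> ?s (chain_par K c)" using chain_par_gt[OF K, of c] by simp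
  qed (use p in \<open>auto simp: nat_neq_iff\<close>)
  have makespan: "pebble_makespan ?n ?s \<le> real ?n"
    unfolding makespan_def using K p by (subst Max_le_iff) (auto simp flip: of_nat_mult)
  have "mem_at ?n ?n (chain_par K) (\<lambda>_. 1) (\<lambda>_. 0) (\<lambda>_. 1) ?s t \<le> 3" for t
  proof -
    let ?live = "\<lambda>i. ?s i \<le> t \<and> t < file_end ?n ?n (chain_par K) (\<lambda>_. 1) ?s i"
    let ?B = "{i\<in>{1..?n}. real i - 1 \<le> t \<and> (t < real i + 1 \<or> (K dvd i \<and> t < real i + real K))}"
    have "mem_at ?n ?n (chain_par K) (\<lambda>_. 1) (\<lambda>_. 0) (\<lambda>_. 1) ?s t = real (card {i\<in>{1..?n}. ?live i})"
      unfolding mem_at_def by (simp add: sum.If_cases Int_def)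
    also have "{i\<in>{1..?n}. ?live i} \<subseteq> ?B"
    proof
      fix i assume i: "i \<in> {i\<in>{1..?n}. ?live i}"
      show "i \<in> ?B"
      proof (cases "i = ?n")
        case True
        thus ?thesis using i makespan K by (auto simp: file_end_def)
      next
        case False
        thus ?thesis using i by (auto simp: file_end_def chain_par_def split: if_splits)
      qed
    qed
    hence "real (card {i\<in>{1..?n}. ?live i}) \<le> real (card ?B)" by (intro of_nat_mono card_mono) auto
    also have "\<dots> \<le> 3" using live_files_card[OF K, of ?n t] by simp
    finally show ?thesis .
  qed
  thus "pebble_peak ?n ?n (chain_par K) ?s \<le> 3"
    unfolding peak_mem_def by (intro cSUP_least) auto
qed


subsection \<open>A parallel schedule with makespan K - 1 + p\<close>

text \<open>Processor b runs the K - 1 non-top nodes of chain b at times 0, ..., K - 2; afterwards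
  processor 0 runs the chain tops bK + K at times K - 1 + b, in increasing order of b.\<close>

definition fast_start :: "nat \<Rightarrow> nat \<Rightarrow> nat" where
  "fast_start K i = (if (i - 1) mod K < K - 1 then (i - 1) mod K else K - 1 + (i - 1) div K)"

definition fast_proc :: "nat \<Rightarrow> nat \<Rightarrow> nat" where
  "fast_proc K i = (if (i - 1) mod K < K - 1 then (i - 1) div K else 0)"

lemma fast_schedule_at:
  fixes K b j :: nat
  assumes "j < K"
  shows "fast_start K (b*K + j + 1) = (if j < K - 1 then j else K - 1 + b)"
    and "fast_proc K (b*K + j + 1) = (if j < K - 1 then b else 0)"
  using assms by (simp_all add: fast_start_def fast_proc_def)

lemma fast_slots_distinct:
  assumes K: "0 < K" and i: "i \<in> {1..p*K}" and i': "i' \<in> {1..p*K}" and "i \<noteq> i'"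
    and "fast_proc K i = fast_proc K i'"
  shows "fast_start K i \<noteq> fast_start K i'"
proof -
  obtain b j where bj: "b < p" "j < K" "i = b*K + j + 1" using node_decomp[OF i K] .
  obtain b' j' where bj': "b' < p" "j' < K" "i' = b'*K + j' + 1" using node_decomp[OF i' K] .
  show ?thesis
  proof
    assume start: "fast_start K i = fast_start K i'"
    have "b = b' \<and> j = j'"
      using start assms(5) fast_schedule_at[OF bj(2), of b] fast_schedule_at[OF bj'(2), of b'] bj bj'
      by (cases "j < K - 1"; cases "j' < K - 1") (simp_all, linarith+)
    thus False using assms(4) bj bj' by simp
  qed
qed

lemma fast_precedence:
  assumes K: "0 < K" and c: "c \<in> {1..p*K}"
  shows "fast_start K c + 1 \<le> fast_start K (chain_par K c)"
proof -
  obtain b j where bj: "b < p" "j < K" "c = b*K + j + 1" using node_decomp[OF c K] .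
  show ?thesis
  proof (cases "j + 1 = K")
    case True
    hence top: "\<not> j < K - 1" by simp
    have "chain_par K c = (b + 1)*K + j + 1"
      using True top_of_chain_iff[OF bj(2), of b] bj by (simp add: chain_par_def)
    hence "fast_start K (chain_par K c) = K - 1 + (b + 1)"
      using fast_schedule_at(1)[OF bj(2), of "b + 1"] top by simp
    moreover have "fast_start K c = K - 1 + b"
      using fast_schedule_at(1)[OF bj(2), of b] top bj by simp
    ultimately show ?thesis by simp
  next
    case False
    hence "chain_par K c = b*K + (j + 1) + 1" and "j + 1 < K"
      using top_of_chain_iff[OF bj(2), of b] bj by (simp_all add: chain_par_def)
    thus ?thesis using fast_schedule_at[OF bj(2), of b] fast_schedule_at[of "j + 1" K b] bj
      by auto
  qed
qed

lemma fast_schedule: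
  fixes K p :: nat
  assumes K: "0 < K" and p: "0 < p"
  shows "pebble_schedule (p*K) (p*K) (chain_par K) p (fast_proc K) (\<lambda>i. real (fast_start K i))"
    and "pebble_makespan (p*K) (\<lambda>i. real (fast_start K i)) \<le> real (K - 1 + p)"
proof -
  let ?n = "p*K"
  show "pebble_schedule ?n ?n (chain_par K) p (fast_proc K) (\<lambda>i. real (fast_start K i))"
  proof (rule pebble_scheduleI)
    fix i assume "i \<in> {1..?n}"
    then obtain b j where "b < p" "j < K" "i = b*K + j + 1" using node_decomp[OF _ K] by blast
    thus "0 \<le> real (fast_start K i) \<and> fast_proc K i < p"
      using p fast_schedule_at(2)[of j K b] by simp
  next
    fix i i' assume "i \<in> {1..?n}" "i' \<in> {1..?n}" "i \<noteq> i'" "fast_proc K i = fast_proc K i'"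
    hence "fast_start K i \<noteq> fast_start K i'" by (rule fast_slots_distinct[OF K])
    thus "real (fast_start K i) + 1 \<le> real (fast_start K i') \<or>
          real (fast_start K i') + 1 \<le> real (fast_start K i)" by linarith
  next
    fix c assume "c \<in> {1..?n}"
    thus "real (fast_start K c) + 1 \<le> real (fast_start K (chain_par K c))"
      using fast_precedence[OF K] by (metis of_nat_1 of_nat_add of_nat_le_iff)
  qed
  have "fast_start K i + 1 \<le> K - 1 + p" if i: "i \<in> {1..?n}" for i
  proof -
    obtain b j where "b < p" "j < K" "i = b*K + j + 1" using node_decomp[OF i K] .
    thus ?thesis using fast_schedule_at(1)[of j K b] by auto
  qed
  hence "real (fast_start K i) + 1 \<le> real (K - 1 + p)" if "i \<in> {1..?n}" for i
    using that by (metis of_nat_1 of_nat_add of_nat_le_iff)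
  thus "pebble_makespan ?n (\<lambda>i. real (fast_start K i)) \<le> real (K - 1 + p)"
    unfolding makespan_def using K p by (subst Max_le_iff) auto
qed


section \<open>The inapproximability theorem\<close>

text \<open>If 3x < 2p, long enough chains make 3x times the parallel makespan smaller than the
  memory-time lower bound 2pK - 1.\<close>

lemma long_chains_exist:
  fixes x :: real and p :: nat
  assumes "0 \<le> x" and "3 * x < 2 * real p"
  obtains K :: nat where "0 < K" and "3 * x * real (K - 1 + p) < 2 * real (p*K) - 1"
proof -
  define D where "D = 2 * real p - 3 * x"
  have D: "0 < D" using assms(2) by (simp add: D_def)
  obtain N :: nat where "(3 * x * real p + 1) / D < real N" using reals_Archimedean2 by blast
  hence "3 * x * real p + 1 < real N * D" using D by (simp add: pos_divide_less_eq)
  hence "3 * x * real p + 1 - 2 * real p < (real N + 1) * D" using D by (simp add: algebra_simps)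
  hence "3 * x * real (Suc (Suc N) - 1 + p) < 2 * real (p * Suc (Suc N)) - 1"
    by (simp add: D_def algebra_simps)
  thus ?thesis using that[of "Suc (Suc N)"] by simp
qed

text \<open>Main theorem.\<close>

theorem theorem3:
  fixes p :: nat and \<alpha> \<beta> :: real
  assumes "p \<ge> 2" and "\<alpha> > 0" and "\<beta> > 0"
    and "\<alpha> * \<beta> < 2 * real p / (real_of_int \<lceil>log 2 (real p)\<rceil> + 2)"
  shows "\<exists>n r par. in_tree n r par \<and>
     (\<forall>proc \<sigma>. valid_schedule n r par (\<lambda>_. 1) p proc \<sigma> \<longrightarrow>
        \<not> (makespan n (\<lambda>_. 1) \<sigma> \<le> \<alpha> * opt_makespan n r par (\<lambda>_. 1) p \<and>
           peak_mem n r par (\<lambda>_. 1) (\<lambda>_. 0) (\<lambda>_. 1) \<sigma>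
             \<le> \<beta> * opt_peak_mem n r par (\<lambda>_. 1) (\<lambda>_. 0) (\<lambda>_. 1) p))"
proof -
  have p: "0 < p" using assms(1) by simp
  have ab: "0 \<le> \<alpha> * \<beta>" using assms(2,3) by simp
  define c where "c = real_of_int \<lceil>log 2 (real p)\<rceil> + 2"
  have "1 \<le> log 2 (real p)" using assms(1) by simp
  hence c3: "3 \<le> c" unfolding c_def by linarith
  have "3 * (\<alpha> * \<beta>) \<le> c * (\<alpha> * \<beta>)" using mult_right_mono[OF c3 ab] .
  also have "\<dots> < 2 * real p"
  proof -
    have "0 < c" using c3 by simp
    moreover have "\<alpha> * \<beta> < 2 * real p / c" using assms(4) by (simp add: c_def)
    ultimately show ?thesis by (simp add: pos_less_divide_eq mult.commute)
  qed
  finally obtain K where K0: "0 < K"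
    and small: "3 * (\<alpha> * \<beta>) * real (K - 1 + p) < 2 * real (p*K) - 1"
    using long_chains_exist[OF ab] by blast
  show ?thesis
  proof (intro exI conjI allI impI)
    show "in_tree (p*K) (p*K) (chain_par K)" by (rule chain_tree_in_tree[OF K0 p])
    fix proc \<sigma> assume "pebble_schedule (p*K) (p*K) (chain_par K) p proc \<sigma>"
    thus "\<not> (pebble_makespan (p*K) \<sigma> \<le> \<alpha> * pebble_opt_makespan (p*K) (p*K) (chain_par K) p \<and>
            pebble_peak (p*K) (p*K) (chain_par K) \<sigma> \<le> \<beta> * pebble_opt_peak (p*K) (p*K) (chain_par K) p)"
      using small
      by (intro no_bicriteria_schedule[OF chain_tree_in_tree[OF K0 p] assms(2,3)
                 sequential_schedule[OF K0 p] fast_schedule[OF K0 p]])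
         (simp_all add: algebra_simps)
  qed
qed

end
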